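(* In the SMA-DP-SGD setting below, fix an iteration $t$ and a realizable global prior private release history $\mathcal H_t$. Let $\varepsilon_{\mathrm{SGM}}(\lambda_{\mathrm R};q,\sigma)$ denote any valid Rényi-DP upper bound at order $\lambda_{\mathrm R}>1$ for the Poisson-subsampled Gaussian mechanism with subsampling probability $q$ and noise-to-sensitivity ratio $\sigma$, and define $$\sigma_{\mathrm{eff},t}=\frac{1}{\beta\left(\sum_{g=1}^G\sigma_{t,g}^{-2}\right)^{1/2}}.$$ Then the joint release $$\tilde s_t=r_t(D;m_t,\mathcal H_t)+Z_t,\qquad Z_t\sim\mathcal N(0,\Sigma_t),$$ where $m_t$ is a Poisson mask with probability $q_t$, satisfies $\left(\lambda_{\mathrm R},\varepsilon_{\mathrm{SGM}}(\lambda_{\mathrm R};q_t,\sigma_{\mathrm{eff},t})\right)$-RDP for every $\lambda_{\mathrm R}>1$.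
   Context: SMA-DP-SGD setting: dataset $D=\{x_1,\dots,x_N\}$; adjacency is add/remove of one example. Parameters are partitioned into groups $g=1,\dots,G$ (dimension $d_g$, identity $I_g$), with clipping norms $C^{(g)}>0$, noise multipliers $\sigma_{t,g}>0$, and fixed mixing coefficient $\beta\in(0,1]$. At step $t$, a Poisson mask $m_t=(m_{t,1},\dots,m_{t,N})$ is drawn with $m_{t,i}\sim\mathrm{Bernoulli}(q_t)$ independently, and the same mask is used for all groups. For each group, $s_t^{(g)}(D;m_t)=\sum_i m_{t,i}\bar g_t^{(g)}(x_i)$, where $\bar g_t^{(g)}(x_i)=g_t^{(g)}(x_i)/\max(1,\|g_t^{(g)}(x_i)\|_2/C^{(g)})$ is the clipped per-example gradient of group $g$ at the current model $\theta_t$. The group query is $r_t^{(g)}(D;m_t,\mathcal H_t)=\beta s_t^{(g)}(D;m_t)+b_t^{(g)}(\mathcal H_t)$, where the memory branch $b_t^{(g)}$ is a deterministic function of the global prior private release history $\mathcal H_t$ (all previous noisy releases $\tilde s_r^{(h)}$, $r<t$), of the model state induced by them, and of public hyperparameters, and does not depend on the current data. The joint query is $r_t=(r_t^{(1)},\dots,r_t^{(G)})$ and $\Sigma_t=\operatorname{diag}(\sigma_{t,1}^2(C^{(1)})^2I_1,\ldots,\sigma_{t,G}^2(C^{(G)})^2I_G)$. *)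

theory Defs
  imports "HOL-Analysis.Analysis" "HOL-Probability.Probability"
begin

definition remove_at :: "nat \<Rightarrow> 'x list \<Rightarrow> 'x list" where
  "remove_at i D = take i D @ drop (Suc i) D"

definition adjacent :: "'x list \<Rightarrow> 'x list \<Rightarrow> bool" where
  "adjacent D D' \<longleftrightarrow>
     (\<exists>i < length D. D' = remove_at i D) \<or> (\<exists>i < length D'. D = remove_at i D')"

definition poisson_mask :: "real \<Rightarrow> nat \<Rightarrow> (nat \<Rightarrow> bool) pmf" where
  "poisson_mask q N = Pi_pmf {..<N} False (\<lambda>_. bernoulli_pmf q)"

definition gauss_dens :: "real^'n::finite \<Rightarrow> ('n \<Rightarrow> real) \<Rightarrow> real^'n \<Rightarrow> real" where
  "gauss_dens mu s y = (\<Prod>i\<in>UNIV. normal_density (mu $ i) (s i) (y $ i))"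

text \<open>Density of the output mean(m) + Z, m ~ pm, Z ~ N(0, diag(s^2)).\<close>
definition mix_dens ::
  "'m pmf \<Rightarrow> ('m \<Rightarrow> real^'n::finite) \<Rightarrow> ('n \<Rightarrow> real) \<Rightarrow> real^'n \<Rightarrow> real" where
  "mix_dens pm mean s y = measure_pmf.expectation pm (\<lambda>m. gauss_dens (mean m) s y)"

definition masked_sum :: "('x \<Rightarrow> real^'n::finite) \<Rightarrow> 'x list \<Rightarrow> (nat \<Rightarrow> bool) \<Rightarrow> real^'n" where
  "masked_sum v D m = (\<Sum>i<length D. if m i then v (D ! i) else 0)"

definition renyi_div :: "real \<Rightarrow> ('a \<Rightarrow> real) \<Rightarrow> ('a \<Rightarrow> real) \<Rightarrow> 'a measure \<Rightarrow> ereal" where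
  "renyi_div lam p q mu =
     (let I = (\<integral>\<^sup>+ x. ennreal (p x powr lam * q x powr (1 - lam)) \<partial>mu)
      in if I = \<top> then \<infinity> else ereal (ln (enn2real I) / (lam - 1)))"

text \<open>A mechanism maps a dataset to the density of its output distribution on real^'n.\<close>
definition rdp :: "('x list \<Rightarrow> real^'n::finite \<Rightarrow> real) \<Rightarrow> real \<Rightarrow> real \<Rightarrow> bool" where
  "rdp mech lam eps \<longleftrightarrow>
     (\<forall>D D'. adjacent D D' \<longrightarrow> renyi_div lam (mech D) (mech D') lborel \<le> ereal eps)"

text \<open>Sensitivity-1 per-example contributions f(x) (norm <= 1), Poisson rate q,
  isotropic Gaussian noise of standard deviation sg.\<close>
definition sgm_dens :: "real \<Rightarrow> real \<Rightarrow> ('x \<Rightarrow> real^'n::finite) \<Rightarrow> 'x list \<Rightarrow> real^'n \<Rightarrow> real" where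
  "sgm_dens q sg f D = mix_dens (poisson_mask q (length D)) (masked_sum f D) (\<lambda>_. sg)"

definition valid_sgm_bound ::
  "(real \<Rightarrow> real \<Rightarrow> real \<Rightarrow> real) \<Rightarrow> 'x itself \<Rightarrow> 'n::finite itself \<Rightarrow> bool" where
  "valid_sgm_bound eps _ _ \<longleftrightarrow>
     (\<forall>lam q sg (f :: 'x \<Rightarrow> real^'n). lam > 1 \<and> 0 \<le> q \<and> q \<le> 1 \<and> sg > 0 \<and>
        (\<forall>x. norm (f x) \<le> 1) \<longrightarrow> rdp (sgm_dens q sg f) lam (eps lam q sg))"

text \<open>Coordinates of real^'n are partitioned into groups via grp.
  Group restriction and per-group clipping.\<close>
definition group_part :: "('n::finite \<Rightarrow> 'g) \<Rightarrow> 'g \<Rightarrow> real^'n \<Rightarrow> real^'n" where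
  "group_part grp g v = (\<chi> i. if grp i = g then v $ i else 0)"

definition clip_groups :: "('n::finite \<Rightarrow> 'g) \<Rightarrow> ('g \<Rightarrow> real) \<Rightarrow> real^'n \<Rightarrow> real^'n" where
  "clip_groups grp C v =
     (\<chi> i. v $ i / max 1 (norm (group_part grp (grp i) v) / C (grp i)))"

text \<open>Density of the joint release
  s~_t = beta * sum_i m_i clip(grad x_i) + b + Z,  Z ~ N(0, Sigma_t),
  Sigma_t = diag(sigma_g^2 C_g^2 I_g).  grad (per-example gradient at theta_t) and
  b (memory branch) are determined by the fixed history H_t.\<close>
definition sma_dens ::
  "real \<Rightarrow> ('n::finite \<Rightarrow> 'g) \<Rightarrow> ('g \<Rightarrow> real) \<Rightarrow> ('g \<Rightarrow> real) \<Rightarrow> ('x \<Rightarrow> real^'n)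
     \<Rightarrow> real^'n \<Rightarrow> real \<Rightarrow> 'x list \<Rightarrow> real^'n \<Rightarrow> real" where
  "sma_dens beta grp C sg grad b q D =
     mix_dens (poisson_mask q (length D))
       (\<lambda>m. beta *\<^sub>R masked_sum (\<lambda>x. clip_groups grp C (grad x)) D m + b)
       (\<lambda>i. sg (grp i) * C (grp i))"

definition sigma_eff :: "real \<Rightarrow> ('g::finite \<Rightarrow> real) \<Rightarrow> real" where
  "sigma_eff beta sg = 1 / (beta * sqrt (\<Sum>g\<in>UNIV. 1 / (sg g)\<^sup>2))"

end

theory Submission
  imports Defs
begin

text \<open>Rescaling coordinate i by d i = sigma (grp i) * C (grp i) / sigma_eff, after shifting
  by the memory branch b, is an invertible affine change of variables; both output densities
  pick up the same Jacobian factor, so every Renyi divergence is unchanged. In the new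
  coordinates the release is a Poisson-subsampled Gaussian mechanism with isotropic noise
  sigma_eff whose per-example contributions beta * clip(g) / d have norm at most 1: the squared
  norm is the sum over groups of (beta sigma_eff / (sigma_g C_g))^2 times the squared norm of the
  clipped group, which is at most beta^2 sigma_eff^2 times the sum of sigma_g^-2, i.e. 1.\<close>

lemma Basis_vec_real: "(Basis :: (real^'n::finite) set) = range (\<lambda>i. axis i 1)"
  by (auto simp: Basis_vec_def)

lemma lborel_vec_diagonal_affine:
  fixes t :: "real^'n::finite" and d :: "'n \<Rightarrow> real"
  assumes "\<And>i. d i \<noteq> 0"
  shows "lborel = density (distr lborel borel (\<lambda>x. t + (\<chi> i. d i * x$i))) (\<lambda>_. \<Prod>i\<in>UNIV. \<bar>d i\<bar>)"
proof -
  \<comment> \<open>Any c with c (axis k 1) = d k turns the Basis-indexed map of the library into the diagonal one.\<close>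
  define c where "c j = (\<Sum>i\<in>UNIV. d i * (j::real^'n) $ i)" for j
  have c_axis: "c (axis k 1) = d k" for k
    by (simp add: c_def axis_def if_distrib cong: if_cong)
  have inj: "inj (\<lambda>i::'n. axis i (1::real))"
    by (auto simp: inj_def axis_eq_axis)
  have linear_part: "(\<Sum>j\<in>Basis. (c j * (x \<bullet> j)) *\<^sub>R j) = (\<chi> i. d i * x$i)" for x :: "real^'n"
    unfolding Basis_vec_real sum.reindex[OF inj] comp_def c_axis inner_axis
    by (simp add: vec_eq_iff axis_def if_distrib cong: if_cong)
  have jacobian: "(\<Prod>j\<in>Basis. \<bar>c j\<bar>) = (\<Prod>i\<in>UNIV. \<bar>d i\<bar>)"
    by (simp add: Basis_vec_real prod.reindex[OF inj] c_axis)
  have "lborel = density (distr lborel borel (\<lambda>x. t + (\<Sum>j\<in>Basis. (c j * (x \<bullet> j)) *\<^sub>R j)))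
      (\<lambda>_. \<Prod>j\<in>Basis. \<bar>c j\<bar>)"
    by (rule lborel_affine_euclidean) (auto simp: Basis_vec_real c_axis assms)
  then show ?thesis
    unfolding linear_part jacobian .
qed

lemma powr_divide_mult_powr_one_minus:
  fixes a b K lam :: real
  assumes "K > 0"
  shows "(a / K) powr lam * (b / K) powr (1 - lam) = a powr lam * b powr (1 - lam) / K"
  using assms by (simp add: powr_divide powr_add[symmetric])

lemma nn_integral_lborel_vec_diagonal_affine:
  fixes t :: "real^'n::finite" and d :: "'n \<Rightarrow> real" and f :: "real^'n \<Rightarrow> ennreal"
  assumes "\<And>i. d i \<noteq> 0" and [measurable]: "f \<in> borel_measurable borel"
  shows "(\<integral>\<^sup>+ y. f y \<partial>lborel) = (\<integral>\<^sup>+ x. (\<Prod>i\<in>UNIV. \<bar>d i\<bar>) * f (t + (\<chi> i. d i * x$i)) \<partial>lborel)"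
proof -
  define T where "T x = t + (\<chi> i. d i * x$i)" for x :: "real^'n"
  have [measurable]: "T \<in> borel_measurable borel"
    unfolding T_def by (intro borel_measurable_continuous_onI continuous_intros)
  have "(\<integral>\<^sup>+ y. f y \<partial>lborel) = (\<integral>\<^sup>+ y. f y \<partial>density (distr lborel borel T) (\<lambda>_. \<Prod>i\<in>UNIV. \<bar>d i\<bar>))"
    unfolding T_def using lborel_vec_diagonal_affine[of d t] assms(1) by simp
  also have "\<dots> = (\<integral>\<^sup>+ x. (\<Prod>i\<in>UNIV. \<bar>d i\<bar>) * f (T x) \<partial>lborel)"
    by (simp add: nn_integral_density nn_integral_distr)
  finally show ?thesis
    unfolding T_def .
qed

lemma renyi_div_diagonal_affine:
  fixes P Q P' Q' :: "real^'n::finite \<Rightarrow> real" and t :: "real^'n"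
  assumes d: "\<And>i. d i > 0"
    and [measurable]: "P \<in> borel_measurable borel" "Q \<in> borel_measurable borel"
    and P: "\<And>x. P (t + (\<chi> i. d i * x$i)) = P' x / (\<Prod>i\<in>UNIV. d i)"
    and Q: "\<And>x. Q (t + (\<chi> i. d i * x$i)) = Q' x / (\<Prod>i\<in>UNIV. d i)"
  shows "renyi_div lam P Q lborel = renyi_div lam P' Q' lborel"
proof -
  define K where "K = (\<Prod>i\<in>UNIV. d i)"
  have K: "K > 0"
    unfolding K_def using d by (simp add: prod_pos)
  have abs_d: "(\<Prod>i\<in>UNIV. \<bar>d i\<bar>) = K"
    unfolding K_def using d by (simp add: less_imp_le)
  have "(\<integral>\<^sup>+ y. ennreal (P y powr lam * Q y powr (1 - lam)) \<partial>lborel)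
      = (\<integral>\<^sup>+ x. ennreal K * ennreal ((P' x / K) powr lam * (Q' x / K) powr (1 - lam)) \<partial>lborel)"
    using d by (subst nn_integral_lborel_vec_diagonal_affine[of d _ t])
      (auto simp: abs_d P Q K_def less_imp_neq[symmetric])
  also have "\<dots> = (\<integral>\<^sup>+ x. ennreal (P' x powr lam * Q' x powr (1 - lam)) \<partial>lborel)"
    using K by (simp add: powr_divide_mult_powr_one_minus ennreal_mult'[symmetric])
  finally show ?thesis
    unfolding renyi_div_def by simp
qed

lemma rdp_if_diagonal_affine_image:
  fixes mech mech' :: "'x list \<Rightarrow> real^'n::finite \<Rightarrow> real"
  assumes rdp': "rdp mech' lam eps"
    and d: "\<And>i. d i > 0"
    and meas: "\<And>D. mech D \<in> borel_measurable borel"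
    and image: "\<And>D x. mech D (t + (\<chi> i. d i * x$i)) = mech' D x / (\<Prod>i\<in>UNIV. d i)"
  shows "rdp mech lam eps"
  unfolding rdp_def
proof (intro allI impI)
  fix D D' :: "'x list"
  assume "adjacent D D'"
  then have "renyi_div lam (mech' D) (mech' D') lborel \<le> ereal eps"
    using rdp' unfolding rdp_def by blast
  then show "renyi_div lam (mech D) (mech D') lborel \<le> ereal eps"
    by (simp add: renyi_div_diagonal_affine[OF d meas meas image image])
qed

lemma normal_density_rescale:
  assumes "d > 0"
  shows "normal_density mu s (t + d * x) = normal_density ((mu - t) / d) (s / d) x / d"
proof -
  have sqrt_eq: "sqrt (2 * pi * (s / d)\<^sup>2) = sqrt (2 * pi * s\<^sup>2) / d"
    using assms by (simp add: power_divide real_sqrt_divide real_sqrt_mult)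
  have exponent_eq: "(x - (mu - t) / d)\<^sup>2 / (2 * (s / d)\<^sup>2) = (t + d * x - mu)\<^sup>2 / (2 * s\<^sup>2)"
    using assms by (cases "s = 0") (simp_all add: field_simps power2_eq_square)
  show ?thesis
    unfolding normal_density_def sqrt_eq using assms by (simp add: exponent_eq del: minus_divide_left)
qed

lemma gauss_dens_diagonal_affine:
  assumes "\<And>i. d i > 0"
  shows "gauss_dens mu s (t + (\<chi> i. d i * x$i))
       = gauss_dens (\<chi> i. (mu$i - t$i) / d i) (\<lambda>i. s i / d i) x / (\<Prod>i\<in>UNIV. d i)"
  unfolding gauss_dens_def using assms by (simp add: normal_density_rescale prod_dividef)

lemma mix_dens_diagonal_affine:
  assumes "\<And>i. d i > 0"
  shows "mix_dens pm mean s (t + (\<chi> i. d i * x$i))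
       = mix_dens pm (\<lambda>m. \<chi> i. (mean m $ i - t$i) / d i) (\<lambda>i. s i / d i) x / (\<Prod>i\<in>UNIV. d i)"
  unfolding mix_dens_def gauss_dens_diagonal_affine[OF assms] by simp

lemma gauss_dens_measurable[measurable]: "gauss_dens mu s \<in> borel_measurable borel"
  unfolding gauss_dens_def[abs_def] by measurable

lemma mix_dens_measurable:
  assumes "finite (set_pmf pm)"
  shows "mix_dens pm mean s \<in> borel_measurable borel"
proof -
  have finite_sum: "mix_dens pm mean s = (\<lambda>y. \<Sum>m\<in>set_pmf pm. gauss_dens (mean m) s y * pmf pm m)"
    by (simp add: fun_eq_iff mix_dens_def integral_measure_pmf_real[OF assms])
  show ?thesis
    unfolding finite_sum by measurable
qed

lemma finite_set_pmf_poisson_mask: "finite (set_pmf (poisson_mask q N))"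
  unfolding poisson_mask_def by (rule finite_subset[OF set_Pi_pmf_subset']) auto

lemma group_part_clip_groups:
  "group_part grp g (clip_groups grp C v)
     = inverse (max 1 (norm (group_part grp g v) / C g)) *\<^sub>R group_part grp g v"
  by (simp add: vec_eq_iff group_part_def clip_groups_def divide_inverse mult.commute)

lemma norm_clip_le:
  fixes v :: "'a::real_normed_vector"
  assumes "C > 0"
  shows "norm (inverse (max 1 (norm v / C)) *\<^sub>R v) \<le> C"
  using assms by (auto simp: max_def field_simps)

lemma norm_group_part_clip_groups_le:
  "C g > 0 \<Longrightarrow> norm (group_part grp g (clip_groups grp C v)) \<le> C g"
  unfolding group_part_clip_groups by (rule norm_clip_le)

lemma norm_group_part_sq:
  fixes grp :: "'n::finite \<Rightarrow> 'g" and w :: "real^'n"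
  shows "(norm (group_part grp g w))\<^sup>2 = (\<Sum>i | grp i = g. (w$i)\<^sup>2)"
proof -
  have "(norm (group_part grp g w))\<^sup>2 = (\<Sum>i\<in>UNIV. if grp i = g then (w$i)\<^sup>2 else 0)"
    unfolding power2_norm_eq_inner inner_vec_def group_part_def
    by (intro sum.cong) (auto simp: power2_eq_square)
  then show ?thesis
    by (simp add: sum.If_cases)
qed

lemma norm_groupwise_scale_sq:
  fixes grp :: "'n::finite \<Rightarrow> 'g::finite" and w :: "real^'n"
  shows "(norm (\<chi> i. a (grp i) * w$i))\<^sup>2 = (\<Sum>g\<in>UNIV. (a g)\<^sup>2 * (norm (group_part grp g w))\<^sup>2)"
proof -
  have "(norm (\<chi> i. a (grp i) * w$i))\<^sup>2 = (\<Sum>i\<in>UNIV. (a (grp i))\<^sup>2 * (w$i)\<^sup>2)"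
    unfolding power2_norm_eq_inner inner_vec_def by (simp add: power2_eq_square mult_ac)
  also have "\<dots> = (\<Sum>g\<in>UNIV. \<Sum>i | grp i = g. (a g)\<^sup>2 * (w$i)\<^sup>2)"
    by (subst sum.group[symmetric, where g=grp and T=UNIV]) auto
  also have "\<dots> = (\<Sum>g\<in>UNIV. (a g)\<^sup>2 * (norm (group_part grp g w))\<^sup>2)"
    by (simp add: norm_group_part_sq sum_distrib_left)
  finally show ?thesis .
qed

lemma sum_inverse_power2_pos:
  fixes sg :: "'g::finite \<Rightarrow> real"
  assumes "\<And>g. sg g > 0"
  shows "(\<Sum>g\<in>UNIV. 1 / (sg g)\<^sup>2) > 0"
  by (intro sum_pos divide_pos_pos zero_less_one zero_less_power assms) auto

lemma sigma_eff_pos: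
  fixes sg :: "'g::finite \<Rightarrow> real"
  assumes "beta > 0" and "\<And>g. sg g > 0"
  shows "sigma_eff beta sg > 0"
proof -
  have "(\<Sum>g\<in>UNIV. 1 / (sg g)\<^sup>2) > 0"
    using assms(2) by (rule sum_inverse_power2_pos)
  then show ?thesis
    unfolding sigma_eff_def using assms(1) by simp
qed

lemma sq_beta_sigma_eff:
  fixes sg :: "'g::finite \<Rightarrow> real"
  assumes "beta > 0" and "\<And>g. sg g > 0"
  shows "(beta * sigma_eff beta sg)\<^sup>2 * (\<Sum>g\<in>UNIV. 1 / (sg g)\<^sup>2) = 1"
proof -
  have "(\<Sum>g\<in>UNIV. 1 / (sg g)\<^sup>2) > 0"
    using assms(2) by (rule sum_inverse_power2_pos)
  then show ?thesis
    unfolding sigma_eff_def using assms(1) by (simp add: power_divide power_mult_distrib)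
qed

lemma norm_groupwise_whitened_le_1:
  fixes grp :: "'n::finite \<Rightarrow> 'g::finite" and w :: "real^'n"
  assumes beta: "beta > 0" and C: "\<And>g. C g > 0" and sg: "\<And>g. sg g > 0"
    and w: "\<And>g. norm (group_part grp g w) \<le> C g"
  shows "norm (\<chi> i. beta * w$i / (sg (grp i) * C (grp i) / sigma_eff beta sg)) \<le> 1"
proof -
  define a where "a g = beta * sigma_eff beta sg / (sg g * C g)" for g
  have "(\<chi> i. beta * w$i / (sg (grp i) * C (grp i) / sigma_eff beta sg)) = (\<chi> i. a (grp i) * w$i)"
    by (simp add: vec_eq_iff a_def)
  moreover have "(norm (\<chi> i. a (grp i) * w$i))\<^sup>2 \<le> 1"
  proof -
    have "(norm (\<chi> i. a (grp i) * w$i))\<^sup>2 \<le> (\<Sum>g\<in>UNIV. (a g)\<^sup>2 * (C g)\<^sup>2)"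
      unfolding norm_groupwise_scale_sq
      by (intro sum_mono mult_left_mono power_mono w) auto
    also have "\<dots> = (beta * sigma_eff beta sg)\<^sup>2 * (\<Sum>g\<in>UNIV. 1 / (sg g)\<^sup>2)"
      unfolding a_def sum_distrib_left using C
      by (intro sum.cong) (auto simp: field_simps less_imp_neq[OF C, symmetric])
    also have "\<dots> = 1"
      using beta sg by (rule sq_beta_sigma_eff)
    finally show ?thesis .
  qed
  ultimately show ?thesis
    by (simp add: power_le_one_iff)
qed

lemma sma_dens_diagonal_affine:
  fixes grp :: "'n::finite \<Rightarrow> 'g" and C sg :: "'g \<Rightarrow> real"
  assumes e: "e > 0" and C: "\<And>g. C g > 0" and sg: "\<And>g. sg g > 0"
  defines "d i \<equiv> sg (grp i) * C (grp i) / e"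
  shows "sma_dens beta grp C sg grad b q D (b + (\<chi> i. d i * x$i))
       = sgm_dens q e (\<lambda>z. \<chi> i. beta * clip_groups grp C (grad z) $ i / d i) D x / (\<Prod>i\<in>UNIV. d i)"
proof -
  have d: "d i > 0" for i
    unfolding d_def using e C sg by simp
  have noise: "(\<lambda>i. sg (grp i) * C (grp i) / d i) = (\<lambda>_. e)"
    using e C sg by (simp add: fun_eq_iff d_def less_imp_neq[symmetric])
  have mean: "(\<lambda>m. \<chi> i. ((beta *\<^sub>R masked_sum (\<lambda>z. clip_groups grp C (grad z)) D m + b) $ i - b $ i) / d i)
      = masked_sum (\<lambda>z. \<chi> i. beta * clip_groups grp C (grad z) $ i / d i) D"
    by (auto simp: fun_eq_iff vec_eq_iff masked_sum_def sum_distrib_left sum_divide_distrib intro!: sum.cong)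
  show ?thesis
    unfolding sma_dens_def sgm_dens_def mix_dens_diagonal_affine[OF d] noise mean ..
qed

theorem theoremB2:
  fixes beta q :: real
    and grp :: "'n::finite \<Rightarrow> 'g::finite"
    and C sg :: "'g \<Rightarrow> real"
    and grad :: "'x \<Rightarrow> real^'n"
    and b :: "real^'n"
    and eps :: "real \<Rightarrow> real \<Rightarrow> real \<Rightarrow> real"
  assumes "0 < beta" and "beta \<le> 1"
    and "0 \<le> q" and "q \<le> 1"
    and "\<forall>g. C g > 0" and "\<forall>g. sg g > 0"
    and "valid_sgm_bound eps TYPE('x) TYPE('n)"
  shows "\<forall>lam > 1. rdp (sma_dens beta grp C sg grad b q) lam
                        (eps lam q (sigma_eff beta sg))"
proof (intro allI impI)
  fix lam :: real
  assume "lam > 1"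
  have beta: "beta > 0" and C: "\<And>g. C g > 0" and sg: "\<And>g. sg g > 0"
    using assms by auto
  define e where "e = sigma_eff beta sg"
  define d where "d i = sg (grp i) * C (grp i) / e" for i
  define f where "f z = (\<chi> i. beta * clip_groups grp C (grad z) $ i / d i)" for z
  have e: "e > 0"
    unfolding e_def using beta sg by (rule sigma_eff_pos)
  have "norm (f z) \<le> 1" for z
    unfolding f_def d_def e_def
    using beta C sg by (rule norm_groupwise_whitened_le_1) (rule norm_group_part_clip_groups_le[where C=C, OF C])
  then have "rdp (sgm_dens q e f) lam (eps lam q e)"
    using assms(3,4,7) \<open>lam > 1\<close> e unfolding valid_sgm_bound_def by blast
  then show "rdp (sma_dens beta grp C sg grad b q) lam (eps lam q (sigma_eff beta sg))"
    unfolding e_def[symmetric]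
  proof (rule rdp_if_diagonal_affine_image[where d=d and t=b])
    show "d i > 0" for i
      unfolding d_def using e C sg by simp
    show "sma_dens beta grp C sg grad b q D \<in> borel_measurable borel" for D
      unfolding sma_dens_def by (intro mix_dens_measurable finite_set_pmf_poisson_mask)
    show "sma_dens beta grp C sg grad b q D (b + (\<chi> i. d i * x$i))
        = sgm_dens q e f D x / (\<Prod>i\<in>UNIV. d i)" for D x
      unfolding f_def d_def using e C sg by (rule sma_dens_diagonal_affine)
  qed
qed

end
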